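(* Let $w\in S_n$ be fireworks. Then the Rajchgot code $\mathrm{rajcode}(w)=(r_1,\ldots,r_n)$ satisfies $r_n=0$ and, for $i<n$, $r_i=r_{i+1}$ if $w(i)<w(i+1)$ and $r_i=r_{i+1}+1$ if $w(i)>w(i+1)$.
   Context: Permutations are written in one-line notation. The decreasing runs of $w$ are the maximal consecutive decreasing segments of the one-line notation; $w$ is fireworks if the initial elements of its decreasing runs occur in increasing order. The Rajchgot code of $w\in S_n$ is $\mathrm{rajcode}(w)=(r_1,\ldots,r_n)$, where $r_j$ is defined as follows: choose an increasing subsequence of $w(j),w(j+1),\ldots,w(n)$ containing $w(j)$ of greatest length among all such subsequences, and let $r_j$ be the number of terms of $w(j),\ldots,w(n)$ omitted to form it. *)

theory Defs
  imports Main
begin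

text \<open>Permutations of S_n are one-line notation lists w = [w(1),...,w(n)] with
  set w = {1..n} and distinct w.  Positions are 1-based: pos w i = w(i).\<close>

definition is_perm :: "nat \<Rightarrow> nat list \<Rightarrow> bool" where
  "is_perm n w \<longleftrightarrow> length w = n \<and> distinct w \<and> set w = {1..n}"

definition pos :: "nat list \<Rightarrow> nat \<Rightarrow> nat" where
  "pos w i = w ! (i - 1)"

text \<open>i is the first position of a (maximal) decreasing run.\<close>
definition run_start :: "nat list \<Rightarrow> nat \<Rightarrow> bool" where
  "run_start w i \<longleftrightarrow> 1 \<le> i \<and> i \<le> length w \<and> (i = 1 \<or> pos w (i - 1) < pos w i)"

definition fireworks :: "nat list \<Rightarrow> bool" where
  "fireworks w \<longleftrightarrow> (\<forall>i j. run_start w i \<and> run_start w j \<and> i < j \<longrightarrow> pos w i < pos w j)"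

text \<open>Sets of positions S \<subseteq> {j..n} containing j on which w is increasing,
  i.e. increasing subsequences of w(j),...,w(n) containing w(j).\<close>
definition inc_subseqs :: "nat list \<Rightarrow> nat \<Rightarrow> nat set set" where
  "inc_subseqs w j = {S. S \<subseteq> {j..length w} \<and> j \<in> S \<and>
      (\<forall>a\<in>S. \<forall>b\<in>S. a < b \<longrightarrow> pos w a < pos w b)}"

definition rajcode :: "nat list \<Rightarrow> nat \<Rightarrow> nat" where
  "rajcode w j = (length w - j + 1) - Max (card ` inc_subseqs w j)"

end

theory Submission
  imports Defs
begin

text \<open>For a fireworks permutation, a longest increasing subsequence of \<open>w(j), \<dots>, w(n)\<close>
  through \<open>w(j)\<close> consists of \<open>w(j)\<close> and the tops \<open>w(k)\<close> of all ascents \<open>w(k-1) < w(k)\<close>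
  with \<open>k > j\<close>. These tops start decreasing runs, so the fireworks condition makes them
  increasing, and each exceeds \<open>w(j)\<close> because \<open>w(j)\<close> is at most the start of its own run.
  Conversely, in any increasing subsequence two consecutive terms are separated by an
  ascent, so no longer one exists (this half holds for every word). Hence
  \<open>r\<^sub>j = n - j - #{ascents after j}\<close>, and the recursion follows.\<close>

definition ascents_after :: "nat list \<Rightarrow> nat \<Rightarrow> nat set" where
  "ascents_after w j = {k. j < k \<and> k \<le> length w \<and> pos w (k - 1) < pos w k}"

lemma finite_ascents_after [simp]: "finite (ascents_after w j)"
  by (simp add: ascents_after_def)

lemma card_ascents_after_le: "card (ascents_after w j) \<le> length w - j"
proof -
  have "ascents_after w j \<subseteq> {j<..length w}" by (auto simp: ascents_after_def)
  then show ?thesis by (metis card_greaterThanAtMost card_mono finite_greaterThanAtMost)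
qed

lemma card_ascents_after_Suc:
  assumes "i < length w"
  shows "card (ascents_after w i) =
    card (ascents_after w (Suc i)) + (if pos w i < pos w (Suc i) then 1 else 0)"
proof -
  have "ascents_after w i = ascents_after w (Suc i) \<union>
      (if pos w i < pos w (Suc i) then {Suc i} else {})"
    using assms unfolding ascents_after_def by (auto simp: Suc_le_eq nat_less_le)
  moreover have "Suc i \<notin> ascents_after w (Suc i)" by (simp add: ascents_after_def)
  ultimately show ?thesis by simp
qed

lemma exists_ascent_between:
  assumes "a \<le> b" and "pos w a < pos w b"
  shows "\<exists>k. a < k \<and> k \<le> b \<and> pos w (k - 1) < pos w k"
  using assms
proof (induction b rule: dec_induct)
  case base
  then show ?case by simp
next
  case (step m)
  show ?case
  proof (cases "pos w m < pos w (Suc m)")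
    case True
    then show ?thesis using step.hyps(1) by (intro exI[of _ "Suc m"]) auto
  next
    case False
    then show ?thesis using step by (metis le_SucI not_less order_less_le_trans)
  qed
qed

lemma card_inc_subseq_le:
  assumes "S \<in> inc_subseqs w j"
  shows "card S \<le> Suc (card (ascents_after w j))"
proof -
  have S: "S \<subseteq> {j..length w}" "j \<in> S"
    and S_inc: "\<And>a b. a \<in> S \<Longrightarrow> b \<in> S \<Longrightarrow> a < b \<Longrightarrow> pos w a < pos w b"
    using assms unfolding inc_subseqs_def by auto
  let ?A = "\<lambda>b. {k. j < k \<and> k \<le> b \<and> pos w (k - 1) < pos w k}"
  define last_ascent where "last_ascent b = Max (?A b)" for b
  have ascent_before: "\<exists>k. a < k \<and> k \<le> b \<and> pos w (k - 1) < pos w k"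
    if "a \<in> S" "b \<in> S" "a < b" for a b
    using exists_ascent_between S_inc that by (meson less_imp_le)
  have last_ascent_in: "last_ascent b \<in> ?A b" if "b \<in> S - {j}" for b
  proof -
    have "j < b" using that S by force
    then have "?A b \<noteq> {}" using ascent_before[of j b] that S(2) by auto
    then show ?thesis unfolding last_ascent_def by (intro Max_in) auto
  qed
  have "inj_on last_ascent (S - {j})"
  proof (rule linorder_inj_onI)
    fix a b assume ab: "a < b" "a \<in> S - {j}" "b \<in> S - {j}"
    then obtain k where k: "a < k" "k \<le> b" "pos w (k - 1) < pos w k"
      using ascent_before by blast
    have "j < k" using k ab S by force
    with k have "k \<le> last_ascent b" unfolding last_ascent_def by (intro Max_ge) auto
    moreover have "last_ascent a \<le> a" using last_ascent_in[OF ab(2)] by simp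
    ultimately show "last_ascent a \<noteq> last_ascent b" using k by simp
  qed auto
  moreover have "last_ascent ` (S - {j}) \<subseteq> ascents_after w j"
    using last_ascent_in S(1) by (fastforce simp: ascents_after_def)
  ultimately have "card (S - {j}) \<le> card (ascents_after w j)"
    by (intro card_inj_on_le) auto
  moreover have "card S = Suc (card (S - {j}))"
    using finite_subset[OF S(1)] S(2) by (intro card.remove) auto
  ultimately show ?thesis by simp
qed

lemma run_start_if_ascent:
  assumes "1 < k" "k \<le> length w" "pos w (k - 1) < pos w k"
  shows "run_start w k"
  using assms by (simp add: run_start_def)

lemma exists_run_start_pos_ge:
  assumes "1 \<le> j" "j \<le> length w"
  shows "\<exists>s \<le> j. run_start w s \<and> pos w j \<le> pos w s"
  using assms
proof (induction j rule: dec_induct)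
  case base
  then show ?case by (auto simp: run_start_def)
next
  case (step m)
  show ?case
  proof (cases "pos w m < pos w (Suc m)")
    case True
    then show ?thesis using step.hyps(1) step.prems run_start_if_ascent[of "Suc m" w] by auto
  next
    case False
    then show ?thesis using step by (metis Suc_leD le_SucI le_trans not_less)
  qed
qed

lemma ascents_after_in_inc_subseqs:
  assumes "fireworks w" "1 \<le> j" "j \<le> length w"
  shows "insert j (ascents_after w j) \<in> inc_subseqs w j"
proof -
  have run_start: "run_start w k" if "k \<in> ascents_after w j" for k
    using that assms(2) run_start_if_ascent by (simp add: ascents_after_def)
  obtain s where s: "s \<le> j" "run_start w s" "pos w j \<le> pos w s"
    using exists_run_start_pos_ge assms(2,3) by blast
  have after_j: "j < k \<and> k \<le> length w" if "k \<in> ascents_after w j" for k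
    using that by (simp add: ascents_after_def)
  have ascent_above_j: "pos w j < pos w k" if "k \<in> ascents_after w j" for k
  proof -
    have "pos w s < pos w k"
      using assms(1) s(1,2) run_start[OF that] after_j[OF that] unfolding fireworks_def by auto
    then show ?thesis using s(3) by simp
  qed
  have ascents_increasing: "pos w a < pos w b"
    if "a \<in> ascents_after w j" "b \<in> ascents_after w j" "a < b" for a b
    using assms(1) run_start[OF that(1)] run_start[OF that(2)] that(3)
    unfolding fireworks_def by blast
  show ?thesis
    unfolding inc_subseqs_def
    using assms(3) after_j ascent_above_j ascents_increasing by fastforce
qed

lemma rajcode_add_card_ascents_after:
  assumes "fireworks w" "1 \<le> j" "j \<le> length w"
  shows "rajcode w j + card (ascents_after w j) = length w - j"
proof -
  have "finite (inc_subseqs w j)"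
    by (rule finite_subset[of _ "Pow {j..length w}"]) (auto simp: inc_subseqs_def)
  moreover have "card (insert j (ascents_after w j)) = Suc (card (ascents_after w j))"
    by (simp add: ascents_after_def)
  ultimately have "Max (card ` inc_subseqs w j) = Suc (card (ascents_after w j))"
    using ascents_after_in_inc_subseqs[OF assms] card_inc_subseq_le
    by (intro Max_eqI) (auto intro: rev_image_eqI)
  then show ?thesis using card_ascents_after_le[of w j] by (simp add: rajcode_def)
qed

theorem lemma3p12:
  fixes n :: nat and w :: "nat list"
  assumes "1 \<le> n" and "is_perm n w" and "fireworks w"
  shows "rajcode w n = 0 \<and>
    (\<forall>i. 1 \<le> i \<and> i < n \<longrightarrow>
      (pos w i < pos w (i + 1) \<longrightarrow> rajcode w i = rajcode w (i + 1)) \<and>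
      (pos w i > pos w (i + 1) \<longrightarrow> rajcode w i = rajcode w (i + 1) + 1))"
proof -
  have len: "length w = n" using assms(2) by (simp add: is_perm_def)
  note code = rajcode_add_card_ascents_after[OF assms(3)]
  have "rajcode w n = 0" using code[of n] assms(1) len by simp
  moreover have "(pos w i < pos w (Suc i) \<longrightarrow> rajcode w i = rajcode w (Suc i)) \<and>
      (pos w i > pos w (Suc i) \<longrightarrow> rajcode w i = rajcode w (Suc i) + 1)"
    if "1 \<le> i" "i < n" for i
    using code[of i] code[of "Suc i"] card_ascents_after_Suc[of i w] that len by auto
  ultimately show ?thesis by auto
qed

end
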